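(* Let $\Gamma$ be a finitely generated group which is stable and LEF, let $\pi:\mathbb{F}\twoheadrightarrow\Gamma$ be an epimorphism from a free group on a finite basis $X$, and let $S=\pi(X)$. Then $\Gamma$ is residually finite and for every positive integer $l$, $$\max\big\{\mathcal{L}_\Gamma^S\big(F_\Gamma^\pi(2l)\big)!,\ \mathcal{L}_\Gamma^S(l)!\big\}\ge\mathcal{R}_\Gamma^S(l).$$
   Context: For finite $\Omega$, $d_\Omega(\sigma,\tau)=|\{\omega:\sigma(\omega)\ne\tau(\omega)\}|/|\Omega|$. A pair $(\delta,E)$, $\delta\in(0,1]$, $E\subseteq\ker\pi$ finite, is valid for $\epsilon>0$ if for every finite $\Omega$ and homomorphism $\rho:\mathbb{F}\to\mathrm{Sym}(\Omega)$ with $d_\Omega(\rho(r),\mathrm{id})<\delta$ for all $r\in E$ there is a homomorphism $\phi:\Gamma\to\mathrm{Sym}(\Omega)$ with $d_\Omega(\rho(x),\phi(\pi(x)))<\epsilon$ for all $x\in X$; $\Gamma$ is stable if valid pairs exist for all $\epsilon$. $F_\Gamma^\pi(x)=\inf\{\|E\|/\delta:(\delta,E)\text{ valid for }1/x\}$, $\|E\|=\sum_{r\in E}|r|$ (word length in $X$). $B_S(t)$ is the closed ball of radius $t\ge0$ about $e$ in the word metric of $S$. A map $\psi:A\to\Delta$ from a subset $A$ of a group is a local embedding if it is injective and $\psi(gh)=\psi(g)\psi(h)$ whenever $g,h,gh\in A$. $\Gamma$ is LEF if every finite subset admits a local embedding into a finite group. $\mathcal{L}_\Gamma^S(t)$ is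 the minimal order of a finite group admitting a local embedding of $B_S(t)$. $\mathcal{R}_\Gamma^S(l)$ is the minimal order of a finite group $\Delta$ admitting a homomorphism $\Gamma\to\Delta$ injective on $B_S(l)$. *)

theory Defs
  imports Complex_Main "HOL-Algebra.Sym_Groups"
begin

text \<open>A letter (x, True) stands for x, (x, False) for x^-1.\<close>

fun reduced :: "('x \<times> bool) list \<Rightarrow> bool" where
  "reduced [] = True"
| "reduced [a] = True"
| "reduced (a # b # w) = ((\<not> (fst a = fst b \<and> snd a \<noteq> snd b)) \<and> reduced (b # w))"

definition free_words :: "'x set \<Rightarrow> ('x \<times> bool) list set" where
  "free_words X = {w. fst ` set w \<subseteq> X \<and> reduced w}"

text \<open>Evaluation of a word in a group G given the images f of the letters;
  for w a reduced word this is the homomorphism F \<rightarrow> G extending f.\<close>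
definition weval :: "('g, 'b) monoid_scheme \<Rightarrow> ('x \<Rightarrow> 'g) \<Rightarrow> ('x \<times> bool) list \<Rightarrow> 'g" where
  "weval G f w = foldr (\<lambda>(x, b) a. (if b then f x else inv\<^bsub>G\<^esub> (f x)) \<otimes>\<^bsub>G\<^esub> a) w \<one>\<^bsub>G\<^esub>"

definition free_kernel :: "('g, 'b) monoid_scheme \<Rightarrow> 'x set \<Rightarrow> ('x \<Rightarrow> 'g) \<Rightarrow> ('x \<times> bool) list set" where
  "free_kernel G X p = {w \<in> free_words X. weval G p w = \<one>\<^bsub>G\<^esub>}"

definition epi_from_free :: "('g, 'b) monoid_scheme \<Rightarrow> 'x set \<Rightarrow> ('x \<Rightarrow> 'g) \<Rightarrow> bool" where
  "epi_from_free G X p \<longleftrightarrow> p ` X \<subseteq> carrier G \<and> weval G p ` free_words X = carrier G"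

definition ham :: "nat \<Rightarrow> (nat \<Rightarrow> nat) \<Rightarrow> (nat \<Rightarrow> nat) \<Rightarrow> real" where
  "ham n \<sigma> \<tau> = real (card {i \<in> {1..n}. \<sigma> i \<noteq> \<tau> i}) / real n"

text \<open>Homomorphisms rho : F(X) \<rightarrow> Sym(Omega) correspond to maps r : X \<rightarrow> Sym(Omega);
  rho(w) = weval (sym_group n) r w. Finite sets Omega are taken as {1..n}.\<close>
definition valid_pair ::
  "('g, 'b) monoid_scheme \<Rightarrow> 'x set \<Rightarrow> ('x \<Rightarrow> 'g) \<Rightarrow> real \<Rightarrow> real \<Rightarrow> ('x \<times> bool) list set \<Rightarrow> bool" where
  "valid_pair G X p \<epsilon> \<delta> E \<longleftrightarrow>
     0 < \<delta> \<and> \<delta> \<le> 1 \<and> finite E \<and> E \<subseteq> free_kernel G X p \<and>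
     (\<forall>n::nat. \<forall>r. n \<ge> 1 \<longrightarrow> r ` X \<subseteq> carrier (sym_group n) \<longrightarrow>
        (\<forall>w\<in>E. ham n (weval (sym_group n) r w) id < \<delta>) \<longrightarrow>
        (\<exists>\<phi> \<in> hom G (sym_group n). \<forall>x\<in>X. ham n (r x) (\<phi> (p x)) < \<epsilon>))"

definition stable :: "('g, 'b) monoid_scheme \<Rightarrow> 'x set \<Rightarrow> ('x \<Rightarrow> 'g) \<Rightarrow> bool" where
  "stable G X p \<longleftrightarrow> (\<forall>\<epsilon>>0. \<exists>\<delta> E. valid_pair G X p \<epsilon> \<delta> E)"

definition wnorm :: "('x \<times> bool) list set \<Rightarrow> real" where
  "wnorm E = real (\<Sum>w\<in>E. length w)"

definition stab_fun :: "('g, 'b) monoid_scheme \<Rightarrow> 'x set \<Rightarrow> ('x \<Rightarrow> 'g) \<Rightarrow> real \<Rightarrow> real" where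
  "stab_fun G X p x = Inf {wnorm E / \<delta> | \<delta> E. valid_pair G X p (1 / x) \<delta> E}"

definition ball_S :: "('g, 'b) monoid_scheme \<Rightarrow> 'g set \<Rightarrow> real \<Rightarrow> 'g set" where
  "ball_S G S t = {weval G id w | w. fst ` set w \<subseteq> S \<and> real (length w) \<le> t}"

definition local_embedding ::
  "('g, 'b) monoid_scheme \<Rightarrow> 'g set \<Rightarrow> ('d, 'c) monoid_scheme \<Rightarrow> ('g \<Rightarrow> 'd) \<Rightarrow> bool" where
  "local_embedding G A D \<psi> \<longleftrightarrow> \<psi> ` A \<subseteq> carrier D \<and> inj_on \<psi> A \<and>
     (\<forall>g\<in>A. \<forall>h\<in>A. g \<otimes>\<^bsub>G\<^esub> h \<in> A \<longrightarrow> \<psi> (g \<otimes>\<^bsub>G\<^esub> h) = \<psi> g \<otimes>\<^bsub>D\<^esub> \<psi> h)"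

text \<open>Finite groups are represented (up to isomorphism) by groups with carrier in nat.\<close>
definition finite_group :: "nat monoid \<Rightarrow> bool" where
  "finite_group D \<longleftrightarrow> group D \<and> finite (carrier D)"

definition LEF :: "('g, 'b) monoid_scheme \<Rightarrow> bool" where
  "LEF G \<longleftrightarrow> (\<forall>A. A \<subseteq> carrier G \<longrightarrow> finite A \<longrightarrow>
     (\<exists>D \<psi>. finite_group D \<and> local_embedding G A D \<psi>))"

definition residually_finite :: "('g, 'b) monoid_scheme \<Rightarrow> bool" where
  "residually_finite G \<longleftrightarrow> (\<forall>g\<in>carrier G. g \<noteq> \<one>\<^bsub>G\<^esub> \<longrightarrow>
     (\<exists>D h. finite_group D \<and> h \<in> hom G D \<and> h g \<noteq> \<one>\<^bsub>D\<^esub>))"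

definition LEF_growth :: "('g, 'b) monoid_scheme \<Rightarrow> 'g set \<Rightarrow> real \<Rightarrow> nat" where
  "LEF_growth G S t = (LEAST m. \<exists>D \<psi>. finite_group D \<and> card (carrier D) = m \<and>
     local_embedding G (ball_S G S t) D \<psi>)"

definition RF_growth :: "('g, 'b) monoid_scheme \<Rightarrow> 'g set \<Rightarrow> real \<Rightarrow> nat" where
  "RF_growth G S l = (LEAST m. \<exists>D h. finite_group D \<and> card (carrier D) = m \<and>
     h \<in> hom G D \<and> inj_on h (ball_S G S l))"

end

theory Submission
  imports Defs "HOL-Algebra.Weak_Morphisms"
begin

text \<open>
  Fix \<open>l > 0\<close> and put \<open>t = max (F(2l)) l\<close>, where \<open>F\<close> is the stability function.
  Relator norms are natural numbers, so some pair \<open>(\<delta>, E)\<close> valid for \<open>1/(2l)\<close> has norm at most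
  \<open>F(2l)\<close>; hence every relator in \<open>E\<close> has length at most \<open>t\<close>. Take a local embedding \<open>\<psi>\<close>
  of the \<open>t\<close>-ball into a finite group \<open>\<Delta>\<close> of minimal order \<open>L(t)\<close>, and let \<open>\<rho>\<close> send each
  generator \<open>x\<close> to left multiplication by \<open>\<psi>(\<pi> x)\<close> on \<open>\<Delta>\<close>. As \<open>\<psi>\<close> is multiplicative
  along words of length at most \<open>t\<close>, \<open>\<rho>(w)\<close> is left multiplication by \<open>\<psi>(\<pi> w)\<close> for such
  words. In particular the relators of \<open>E\<close> act trivially, and stability yields a homomorphism
  \<open>\<phi> : \<Gamma> \<rightarrow> Sym(\<Delta>)\<close> with \<open>d(\<rho> x, \<phi>(\<pi> x)) < 1/(2l)\<close>. The Hamming distance is subadditive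
  along words, so \<open>\<rho>(w)\<close> and \<open>\<phi>(\<pi> w)\<close> differ on less than half of \<open>\<Delta>\<close> when \<open>|w| \<le> l\<close>.
  If \<open>\<phi> g = \<phi> h\<close> for \<open>g, h\<close> in the \<open>l\<close>-ball, the left multiplications by \<open>\<psi> g\<close> and
  \<open>\<psi> h\<close> thus agree at some point, so \<open>\<psi> g = \<psi> h\<close> and \<open>g = h\<close>. Hence \<open>\<phi>\<close> is injective on
  the \<open>l\<close>-ball and \<open>R(l) \<le> L(t)!\<close>; taking \<open>l\<close> beyond the length of a given \<open>g \<noteq> 1\<close> shows
  that \<open>g\<close> survives in a finite quotient.
\<close>

lemma weval_Nil [simp]: "weval G f [] = \<one>\<^bsub>G\<^esub>"
  by (simp add: weval_def)

lemma weval_Cons [simp]: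
  "weval G f ((x, b) # w) = (if b then f x else inv\<^bsub>G\<^esub> (f x)) \<otimes>\<^bsub>G\<^esub> weval G f w"
  by (simp add: weval_def)

lemma (in group) weval_closed:
  "f ` fst ` set w \<subseteq> carrier G \<Longrightarrow> weval G f w \<in> carrier G"
  by (induction w) auto

lemma (in group_hom) hom_weval:
  "f ` fst ` set w \<subseteq> carrier G \<Longrightarrow> h (weval G f w) = weval H (h \<circ> f) w"
  by (induction w) (auto simp: G.weval_closed)

lemma weval_map_apfst: "weval G f (map (apfst g) w) = weval G (f \<circ> g) w"
  by (induction w) auto

lemma ball_S_image:
  "ball_S G (p ` X) t = {weval G p w | w. fst ` set w \<subseteq> X \<and> real (length w) \<le> t}"
proof (intro equalityI subsetI)
  fix g assume "g \<in> ball_S G (p ` X) t"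
  then obtain w where w: "g = weval G id w" "fst ` set w \<subseteq> p ` X" "real (length w) \<le> t"
    unfolding ball_S_def by blast
  define u where "u = map (apfst (inv_into X p)) w"
  have "map (apfst p) u = w"
    unfolding u_def map_map
  proof (rule map_idI)
    fix a assume "a \<in> set w"
    then have "fst a \<in> p ` X" using w(2) by blast
    then show "(apfst p \<circ> apfst (inv_into X p)) a = a"
      by (cases a) (simp add: f_inv_into_f)
  qed
  moreover have "fst ` set u \<subseteq> X"
    using w(2) by (auto simp: u_def inv_into_into)
  ultimately show "g \<in> {weval G p w | w. fst ` set w \<subseteq> X \<and> real (length w) \<le> t}"
    using w weval_map_apfst[of G id p u] by auto
next
  fix g assume "g \<in> {weval G p w | w. fst ` set w \<subseteq> X \<and> real (length w) \<le> t}"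
  then obtain u where u: "g = weval G p u" "fst ` set u \<subseteq> X" "real (length u) \<le> t"
    by blast
  have "fst ` set (map (apfst p) u) \<subseteq> p ` X"
    using u(2) by force
  then show "g \<in> ball_S G (p ` X) t"
    unfolding ball_S_def using u weval_map_apfst[of G id p u]
    by (intro CollectI exI[of _ "map (apfst p) u"]) simp
qed

lemma weval_in_ball_S:
  "fst ` set w \<subseteq> X \<Longrightarrow> real (length w) \<le> t \<Longrightarrow> weval G p w \<in> ball_S G (p ` X) t"
  by (auto simp: ball_S_image)

lemma (in group) ball_S_subset_carrier: "S \<subseteq> carrier G \<Longrightarrow> ball_S G S t \<subseteq> carrier G"
  unfolding ball_S_def using weval_closed[of id] by auto

lemma finite_ball_S:
  assumes "finite S"
  shows "finite (ball_S G S t)"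
proof -
  have "ball_S G S t \<subseteq> weval G id ` {w. set w \<subseteq> S \<times> UNIV \<and> length w \<le> nat \<lfloor>t\<rfloor>}"
    unfolding ball_S_def by (force intro!: imageI le_nat_floor)
  moreover have "finite {w. set w \<subseteq> S \<times> (UNIV :: bool set) \<and> length w \<le> nat \<lfloor>t\<rfloor>}"
    using assms by (intro finite_lists_length_le) simp
  ultimately show ?thesis
    using finite_subset by blast
qed

section \<open>Hamming distance of permutations\<close>

lemma ham_sym: "ham n \<sigma> \<tau> = ham n \<tau> \<sigma>"
  unfolding ham_def by (metis (no_types, lifting))

lemma ham_triangle: "ham n \<sigma> \<tau> \<le> ham n \<sigma> \<upsilon> + ham n \<upsilon> \<tau>"
proof -
  let ?D = "\<lambda>\<sigma> \<tau>. {i \<in> {1..n}. \<sigma> i \<noteq> \<tau> i}"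
  have "card (?D \<sigma> \<tau>) \<le> card (?D \<sigma> \<upsilon> \<union> ?D \<upsilon> \<tau>)"
    by (rule card_mono) auto
  also have "\<dots> \<le> card (?D \<sigma> \<upsilon>) + card (?D \<upsilon> \<tau>)"
    by (rule card_Un_le)
  finally show ?thesis
    unfolding ham_def add_divide_distrib[symmetric] by (intro divide_right_mono) simp_all
qed

lemma ham_comp_right:
  assumes "\<sigma> permutes {1..n}"
  shows "ham n (f \<circ> \<sigma>) (g \<circ> \<sigma>) = ham n f g"
proof -
  have "{i \<in> {1..n}. (f \<circ> \<sigma>) i \<noteq> (g \<circ> \<sigma>) i} = \<sigma> -` {i \<in> {1..n}. f i \<noteq> g i}"
    using permutes_in_image[OF assms] by auto
  moreover have "card (\<sigma> -` {i \<in> {1..n}. f i \<noteq> g i}) = card {i \<in> {1..n}. f i \<noteq> g i}"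
    using permutes_bij[OF assms] by (intro card_vimage_inj) (auto simp: bij_def)
  ultimately show ?thesis
    unfolding ham_def by simp
qed

lemma ham_comp_left_le: "ham n (h \<circ> f) (h \<circ> g) \<le> ham n f g"
proof -
  have "card {i \<in> {1..n}. (h \<circ> f) i \<noteq> (h \<circ> g) i} \<le> card {i \<in> {1..n}. f i \<noteq> g i}"
    by (rule card_mono) auto
  then show ?thesis
    unfolding ham_def by (simp add: divide_right_mono)
qed

lemma ham_comp_le:
  assumes "\<sigma>' permutes {1..n}"
  shows "ham n (\<sigma> \<circ> \<sigma>') (\<tau> \<circ> \<tau>') \<le> ham n \<sigma> \<tau> + ham n \<sigma>' \<tau>'"
proof -
  have "ham n (\<sigma> \<circ> \<sigma>') (\<tau> \<circ> \<tau>') \<le> ham n (\<sigma> \<circ> \<sigma>') (\<tau> \<circ> \<sigma>') + ham n (\<tau> \<circ> \<sigma>') (\<tau> \<circ> \<tau>')"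
    by (rule ham_triangle)
  also have "\<dots> \<le> ham n \<sigma> \<tau> + ham n \<sigma>' \<tau>'"
    using ham_comp_right[OF assms] ham_comp_left_le by (simp add: add_left_mono)
  finally show ?thesis .
qed

lemma ham_inv_le:
  assumes "\<sigma> permutes {1..n}" "\<tau> permutes {1..n}"
  shows "ham n (inv' \<sigma>) (inv' \<tau>) \<le> ham n \<sigma> \<tau>"
proof -
  have "ham n (inv' \<sigma>) (inv' \<tau>) = ham n (inv' \<sigma> \<circ> \<tau>) (inv' \<sigma> \<circ> \<sigma>)"
    using ham_comp_right[OF assms(2), of "inv' \<sigma>" "inv' \<tau>"]
    by (simp add: permutes_inv_o(2)[OF assms(1)] permutes_inv_o(2)[OF assms(2)])
  also have "\<dots> \<le> ham n \<tau> \<sigma>"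
    by (rule ham_comp_left_le)
  finally show ?thesis
    by (simp add: ham_sym)
qed

lemma ham_less_one_imp_agree:
  assumes "ham n \<sigma> \<tau> < 1" "0 < n"
  shows "\<exists>i\<in>{1..n}. \<sigma> i = \<tau> i"
proof (rule ccontr)
  assume "\<not> ?thesis"
  then have "{i \<in> {1..n}. \<sigma> i \<noteq> \<tau> i} = {1..n}"
    by auto
  then show False
    using assms by (simp add: ham_def)
qed

lemma ham_weval_le:
  assumes "r ` X \<subseteq> carrier (sym_group n)" "r' ` X \<subseteq> carrier (sym_group n)"
    and "\<forall>x\<in>X. ham n (r x) (r' x) \<le> c" and "fst ` set w \<subseteq> X"
  shows "ham n (weval (sym_group n) r w) (weval (sym_group n) r' w) \<le> real (length w) * c"
  using assms(4)
proof (induction w)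
  case Nil
  then show ?case
    by (simp add: ham_def sym_group_one)
next
  case (Cons a w)
  obtain x b where a: "a = (x, b)"
    by (cases a)
  have x: "x \<in> X" and w: "fst ` set w \<subseteq> X"
    using Cons.prems a by auto
  have rx: "r x permutes {1..n}" "r' x permutes {1..n}"
    using assms(1,2) x by (auto simp: sym_group_carrier)
  define letter where "letter s = (if b then s x else inv' (s x))" for s :: "'a \<Rightarrow> nat \<Rightarrow> nat"
  have weval_step: "weval (sym_group n) s (a # w) = letter s \<circ> weval (sym_group n) s w"
    if "s x \<in> carrier (sym_group n)" for s
    using that by (simp add: a letter_def sym_group_mult)
  have "r ` fst ` set w \<subseteq> carrier (sym_group n)"
    using assms(1) w by blast
  then have "weval (sym_group n) r w permutes {1..n}"
    using group.weval_closed[OF sym_group_is_group] by (simp add: sym_group_carrier)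
  then have "ham n (weval (sym_group n) r (a # w)) (weval (sym_group n) r' (a # w))
      \<le> ham n (letter r) (letter r') + ham n (weval (sym_group n) r w) (weval (sym_group n) r' w)"
    using rx by (simp add: weval_step sym_group_carrier ham_comp_le)
  also have "\<dots> \<le> c + real (length w) * c"
    using assms(3) x ham_inv_le[OF rx] Cons.IH[OF w] by (cases b) (auto simp: letter_def)
  finally show ?case
    by (simp add: algebra_simps)
qed

lemma ham_weval_hom_le:
  assumes "group G" "p ` X \<subseteq> carrier G" "\<rho> ` X \<subseteq> carrier (sym_group n)"
    and "\<phi> \<in> hom G (sym_group n)" "\<forall>x\<in>X. ham n (\<rho> x) (\<phi> (p x)) \<le> c" "fst ` set u \<subseteq> X"
  shows "ham n (weval (sym_group n) \<rho> u) (\<phi> (weval G p u)) \<le> real (length u) * c"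
proof -
  interpret \<phi>: group_hom G "sym_group n" \<phi>
    using assms(1,4) sym_group_is_group by (simp add: group_hom_def group_hom_axioms_def)
  have "\<phi> (weval G p u) = weval (sym_group n) (\<phi> \<circ> p) u"
    using assms(2,6) by (intro \<phi>.hom_weval) blast
  moreover have "(\<phi> \<circ> p) ` X \<subseteq> carrier (sym_group n)"
    using assms(2) by auto
  ultimately show ?thesis
    using ham_weval_le[OF assms(3) _ assms(5,6)] by (simp add: comp_def)
qed

section \<open>The regular representation and local embeddings\<close>

definition regular_perm :: "('d, 'c) monoid_scheme \<Rightarrow> (nat \<Rightarrow> 'd) \<Rightarrow> 'd \<Rightarrow> nat \<Rightarrow> nat" where
  "regular_perm D \<beta> d i =
     (if i \<in> {1..order D} then inv_into {1..order D} \<beta> (d \<otimes>\<^bsub>D\<^esub> \<beta> i) else i)"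

context
  fixes D :: "('d, 'c) monoid_scheme" and \<beta> :: "nat \<Rightarrow> 'd"
  assumes D: "group D" and \<beta>: "bij_betw \<beta> {1..order D} (carrier D)"
begin

interpretation D: group D
  by (rule D)

lemma regular_perm_outside: "i \<notin> {1..order D} \<Longrightarrow> regular_perm D \<beta> d i = i"
  by (simp only: regular_perm_def if_False)

lemma regular_perm_mult:
  assumes "d \<in> carrier D" "d' \<in> carrier D"
  shows "regular_perm D \<beta> (d \<otimes>\<^bsub>D\<^esub> d') = regular_perm D \<beta> d \<circ> regular_perm D \<beta> d'"
proof
  fix i
  show "regular_perm D \<beta> (d \<otimes>\<^bsub>D\<^esub> d') i = (regular_perm D \<beta> d \<circ> regular_perm D \<beta> d') i"
  proof (cases "i \<in> {1..order D}")
    case True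
    define j where "j = inv_into {1..order D} \<beta> (d' \<otimes>\<^bsub>D\<^esub> \<beta> i)"
    have "d' \<otimes>\<^bsub>D\<^esub> \<beta> i \<in> carrier D"
      using True assms(2) bij_betwE[OF \<beta>] by blast
    then have "j \<in> {1..order D}" "\<beta> j = d' \<otimes>\<^bsub>D\<^esub> \<beta> i"
      unfolding j_def using bij_betw_apply[OF bij_betw_inv_into[OF \<beta>]] bij_betw_inv_into_right[OF \<beta>]
      by blast+
    then have "(regular_perm D \<beta> d \<circ> regular_perm D \<beta> d') i
        = inv_into {1..order D} \<beta> (d \<otimes>\<^bsub>D\<^esub> (d' \<otimes>\<^bsub>D\<^esub> \<beta> i))"
      using True by (simp only: comp_apply regular_perm_def if_True flip: j_def)
    also have "\<dots> = regular_perm D \<beta> (d \<otimes>\<^bsub>D\<^esub> d') i"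
      using True assms bij_betwE[OF \<beta>] by (simp only: regular_perm_def if_True D.m_assoc)
    finally show ?thesis
      by (rule sym)
  next
    case False
    then show ?thesis
      by (simp add: regular_perm_outside)
  qed
qed

lemma regular_perm_one: "regular_perm D \<beta> \<one>\<^bsub>D\<^esub> = id"
proof
  fix i
  show "regular_perm D \<beta> \<one>\<^bsub>D\<^esub> i = id i"
    using bij_betwE[OF \<beta>] bij_betw_inv_into_left[OF \<beta>] by (simp add: regular_perm_def)
qed

lemma regular_perm_permutes:
  assumes "d \<in> carrier D"
  shows "regular_perm D \<beta> d permutes {1..order D}"
proof -
  have inverse: "regular_perm D \<beta> e (regular_perm D \<beta> e' i) = i"
    if "e \<in> carrier D" "e' \<in> carrier D" "e \<otimes>\<^bsub>D\<^esub> e' = \<one>\<^bsub>D\<^esub>" for e e' i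
    using regular_perm_mult[OF that(1,2)] that(3) regular_perm_one by (metis comp_apply id_apply)
  show ?thesis
    unfolding permutes_def
  proof (intro conjI allI impI)
    fix y
    show "\<exists>!x. regular_perm D \<beta> d x = y"
      using inverse[of d "inv\<^bsub>D\<^esub> d"] inverse[of "inv\<^bsub>D\<^esub> d" d] assms by (metis D.inv_closed D.l_inv D.r_inv)
  qed (simp add: regular_perm_outside)
qed

lemma regular_perm_hom: "regular_perm D \<beta> \<in> hom D (sym_group (order D))"
  by (rule homI) (simp_all only: sym_group_carrier sym_group_mult regular_perm_permutes regular_perm_mult)

lemma regular_perm_agree_imp_eq:
  assumes "d \<in> carrier D" "d' \<in> carrier D" "i \<in> {1..order D}"
    and "regular_perm D \<beta> d i = regular_perm D \<beta> d' i"
  shows "d = d'"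
proof -
  have "\<beta> i \<in> carrier D"
    using assms(3) bij_betwE[OF \<beta>] by blast
  moreover have "inv_into {1..order D} \<beta> (d \<otimes>\<^bsub>D\<^esub> \<beta> i) = inv_into {1..order D} \<beta> (d' \<otimes>\<^bsub>D\<^esub> \<beta> i)"
    using assms(3,4) by (simp add: regular_perm_def)
  ultimately have "d \<otimes>\<^bsub>D\<^esub> \<beta> i = d' \<otimes>\<^bsub>D\<^esub> \<beta> i"
    using assms(1,2) by (metis D.m_closed bij_betw_inv_into_right[OF \<beta>])
  with \<open>\<beta> i \<in> carrier D\<close> show ?thesis
    using assms(1,2) by (simp add: D.right_cancel)
qed

end

lemma local_embedding_mult:
  "local_embedding G A D \<psi> \<Longrightarrow> g \<in> A \<Longrightarrow> h \<in> A \<Longrightarrow> g \<otimes>\<^bsub>G\<^esub> h \<in> A \<Longrightarrow>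
    \<psi> (g \<otimes>\<^bsub>G\<^esub> h) = \<psi> g \<otimes>\<^bsub>D\<^esub> \<psi> h"
  by (simp add: local_embedding_def)

lemma local_embedding_one:
  assumes "group G" "group D" "local_embedding G A D \<psi>" "\<one>\<^bsub>G\<^esub> \<in> A"
  shows "\<psi> \<one>\<^bsub>G\<^esub> = \<one>\<^bsub>D\<^esub>"
proof -
  interpret G: group G by fact
  interpret D: group D by fact
  have "\<psi> \<one>\<^bsub>G\<^esub> \<in> carrier D"
    using assms(3,4) by (auto simp: local_embedding_def)
  moreover have "\<psi> \<one>\<^bsub>G\<^esub> \<otimes>\<^bsub>D\<^esub> \<psi> \<one>\<^bsub>G\<^esub> = \<psi> \<one>\<^bsub>G\<^esub>"
    using local_embedding_mult[OF assms(3,4,4)] assms(4) by simp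
  ultimately show ?thesis
    using D.l_cancel_one by blast
qed

lemma local_embedding_inv:
  assumes "group G" "group D" "local_embedding G A D \<psi>" "\<one>\<^bsub>G\<^esub> \<in> A"
    and "g \<in> carrier G" "g \<in> A" "inv\<^bsub>G\<^esub> g \<in> A"
  shows "\<psi> (inv\<^bsub>G\<^esub> g) = inv\<^bsub>D\<^esub> \<psi> g"
proof -
  interpret G: group G by fact
  interpret D: group D by fact
  have "\<psi> (inv\<^bsub>G\<^esub> g) \<otimes>\<^bsub>D\<^esub> \<psi> g = \<one>\<^bsub>D\<^esub>"
    using local_embedding_mult[OF assms(3,7,6)] local_embedding_one[OF assms(1-4)] assms(4,5)
    by simp
  moreover have "\<psi> (inv\<^bsub>G\<^esub> g) \<in> carrier D" "\<psi> g \<in> carrier D"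
    using assms(3,6,7) by (auto simp: local_embedding_def)
  ultimately show ?thesis
    using D.inv_equality by metis
qed

lemma local_embedding_weval:
  assumes G: "group G" and D: "group D" and pX: "p ` X \<subseteq> carrier G" and "1 \<le> t"
    and \<psi>: "local_embedding G (ball_S G (p ` X) t) D \<psi>"
    and "fst ` set w \<subseteq> X" "real (length w) \<le> t"
  shows "\<psi> (weval G p w) = weval D (\<psi> \<circ> p) w"
proof -
  interpret G: group G by (rule G)
  have one_in_ball: "\<one>\<^bsub>G\<^esub> \<in> ball_S G (p ` X) t"
    using weval_in_ball_S[of "[]" X t G p] assms(4) by simp
  show ?thesis
    using assms(6,7)
  proof (induction w)
    case Nil
    then show ?case
      using local_embedding_one[OF G D \<psi> one_in_ball] by simp
  next
    case (Cons a w)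
    obtain x b where a: "a = (x, b)"
      by (cases a)
    have x: "x \<in> X" and w: "fst ` set w \<subseteq> X" "real (length w) \<le> t"
      using Cons.prems a by auto
    have px: "p x \<in> carrier G"
      using pX x by blast
    have letter_in_ball: "(if b' then p x else inv\<^bsub>G\<^esub> p x) \<in> ball_S G (p ` X) t" for b'
    proof -
      have "weval G p [(x, b')] \<in> ball_S G (p ` X) t"
        using x assms(4) by (intro weval_in_ball_S) auto
      then show ?thesis
        using px by simp
    qed
    have rest_in_ball: "weval G p w \<in> ball_S G (p ` X) t"
      using w by (rule weval_in_ball_S)
    have word_in_ball: "(if b then p x else inv\<^bsub>G\<^esub> p x) \<otimes>\<^bsub>G\<^esub> weval G p w \<in> ball_S G (p ` X) t"
      using weval_in_ball_S[OF Cons.prems, of G p] by (simp add: a)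
    have "\<psi> (if b then p x else inv\<^bsub>G\<^esub> p x) = (if b then \<psi> (p x) else inv\<^bsub>D\<^esub> \<psi> (p x))"
      using local_embedding_inv[OF G D \<psi> one_in_ball px] letter_in_ball[of True]
        letter_in_ball[of False] by simp
    then show ?case
      using local_embedding_mult[OF \<psi> letter_in_ball rest_in_ball word_in_ball] Cons.IH[OF w]
      by (simp add: a)
  qed
qed

lemma inj_on_ball_S_if_close:
  fixes l :: nat
  assumes G: "group G" and "finite X" and pX: "p ` X \<subseteq> carrier G" and "0 < l" and "0 < n"
    and \<rho>: "\<rho> ` X \<subseteq> carrier (sym_group n)" and \<phi>: "\<phi> \<in> hom G (sym_group n)"
    and close: "\<forall>x\<in>X. ham n (\<rho> x) (\<phi> (p x)) < 1 / (2 * real l)"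
    and separating: "\<And>u v. fst ` set u \<subseteq> X \<Longrightarrow> fst ` set v \<subseteq> X \<Longrightarrow> length u \<le> l \<Longrightarrow>
      length v \<le> l \<Longrightarrow> \<exists>i\<in>{1..n}. weval (sym_group n) \<rho> u i = weval (sym_group n) \<rho> v i \<Longrightarrow>
      weval G p u = weval G p v"
  shows "inj_on \<phi> (ball_S G (p ` X) (real l))"
proof -
  define c where "c = Max (insert 0 ((\<lambda>x. ham n (\<rho> x) (\<phi> (p x))) ` X))"
  have c_ge: "\<forall>x\<in>X. ham n (\<rho> x) (\<phi> (p x)) \<le> c" "0 \<le> c"
    using \<open>finite X\<close> by (simp_all add: c_def)
  have "c < 1 / (2 * real l)"
    using \<open>finite X\<close> close \<open>0 < l\<close> by (simp add: c_def)
  then have "real l * c < 1 / 2"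
    using \<open>0 < l\<close> by (simp add: field_simps)
  have word_close: "ham n (weval (sym_group n) \<rho> u) (\<phi> (weval G p u)) < 1 / 2"
    if u: "fst ` set u \<subseteq> X" "length u \<le> l" for u
  proof -
    have "ham n (weval (sym_group n) \<rho> u) (\<phi> (weval G p u)) \<le> real (length u) * c"
      using ham_weval_hom_le[OF G pX \<rho> \<phi> c_ge(1) u(1)] .
    also have "\<dots> \<le> real l * c"
      using u(2) c_ge(2) by (simp add: mult_right_mono)
    finally show ?thesis
      using \<open>real l * c < 1 / 2\<close> by linarith
  qed
  show ?thesis
  proof (rule inj_onI)
    fix g h
    assume "g \<in> ball_S G (p ` X) (real l)" "h \<in> ball_S G (p ` X) (real l)" and "\<phi> g = \<phi> h"
    then obtain u v where u: "g = weval G p u" "fst ` set u \<subseteq> X" "length u \<le> l"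
      and v: "h = weval G p v" "fst ` set v \<subseteq> X" "length v \<le> l"
      unfolding ball_S_image by auto
    have "ham n (weval (sym_group n) \<rho> u) (weval (sym_group n) \<rho> v)
        \<le> ham n (weval (sym_group n) \<rho> u) (\<phi> g) + ham n (weval (sym_group n) \<rho> v) (\<phi> h)"
      using ham_triangle ham_sym \<open>\<phi> g = \<phi> h\<close> by metis
    also have "\<dots> < 1"
      using word_close[OF u(2,3)] word_close[OF v(2,3)] u(1) v(1) by simp
    finally show "g = h"
      using ham_less_one_imp_agree \<open>0 < n\<close> separating u v by blast
  qed
qed

lemma regular_perm_local_embedding:
  assumes G: "group G" and \<Delta>: "group \<Delta>" and \<beta>: "bij_betw \<beta> {1..order \<Delta>} (carrier \<Delta>)"
    and pX: "p ` X \<subseteq> carrier G" and "1 \<le> t"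
    and \<psi>: "local_embedding G (ball_S G (p ` X) t) \<Delta> \<psi>"
  shows "(regular_perm \<Delta> \<beta> \<circ> (\<psi> \<circ> p)) ` X \<subseteq> carrier (sym_group (order \<Delta>))"
    and "fst ` set u \<subseteq> X \<Longrightarrow> real (length u) \<le> t \<Longrightarrow>
      weval (sym_group (order \<Delta>)) (regular_perm \<Delta> \<beta> \<circ> (\<psi> \<circ> p)) u = regular_perm \<Delta> \<beta> (\<psi> (weval G p u))"
proof -
  interpret G: group G
    by (rule G)
  interpret L: group_hom \<Delta> "sym_group (order \<Delta>)" "regular_perm \<Delta> \<beta>"
    using regular_perm_hom[OF \<Delta> \<beta>] \<Delta> sym_group_is_group
    by (simp add: group_hom_def group_hom_axioms_def)
  have \<psi>p_closed: "(\<psi> \<circ> p) ` X \<subseteq> carrier \<Delta>"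
  proof (intro image_subsetI)
    fix x assume "x \<in> X"
    have "weval G p [(x, True)] \<in> ball_S G (p ` X) t"
      using \<open>x \<in> X\<close> \<open>1 \<le> t\<close> by (intro weval_in_ball_S) simp_all
    moreover have "p x \<in> carrier G"
      using pX \<open>x \<in> X\<close> by blast
    ultimately show "(\<psi> \<circ> p) x \<in> carrier \<Delta>"
      using \<psi> by (auto simp: local_embedding_def)
  qed
  then show "(regular_perm \<Delta> \<beta> \<circ> (\<psi> \<circ> p)) ` X \<subseteq> carrier (sym_group (order \<Delta>))"
    by auto
  assume u: "fst ` set u \<subseteq> X" "real (length u) \<le> t"
  then have "(\<psi> \<circ> p) ` fst ` set u \<subseteq> carrier \<Delta>"
    using \<psi>p_closed by blast
  then have "weval (sym_group (order \<Delta>)) (regular_perm \<Delta> \<beta> \<circ> (\<psi> \<circ> p)) u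
      = regular_perm \<Delta> \<beta> (weval \<Delta> (\<psi> \<circ> p) u)"
    by (rule L.hom_weval[symmetric])
  also have "\<dots> = regular_perm \<Delta> \<beta> (\<psi> (weval G p u))"
    using local_embedding_weval[OF G \<Delta> pX \<open>1 \<le> t\<close> \<psi> u] by simp
  finally show "weval (sym_group (order \<Delta>)) (regular_perm \<Delta> \<beta> \<circ> (\<psi> \<circ> p)) u
      = regular_perm \<Delta> \<beta> (\<psi> (weval G p u))" .
qed

lemma regular_perm_local_embedding_agree_imp_eq:
  assumes G: "group G" and \<Delta>: "group \<Delta>" and \<beta>: "bij_betw \<beta> {1..order \<Delta>} (carrier \<Delta>)"
    and pX: "p ` X \<subseteq> carrier G" and "1 \<le> t"
    and \<psi>: "local_embedding G (ball_S G (p ` X) t) \<Delta> \<psi>"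
    and u: "fst ` set u \<subseteq> X" "real (length u) \<le> t" and v: "fst ` set v \<subseteq> X" "real (length v) \<le> t"
    and "\<exists>i\<in>{1..order \<Delta>}. weval (sym_group (order \<Delta>)) (regular_perm \<Delta> \<beta> \<circ> (\<psi> \<circ> p)) u i
      = weval (sym_group (order \<Delta>)) (regular_perm \<Delta> \<beta> \<circ> (\<psi> \<circ> p)) v i"
  shows "weval G p u = weval G p v"
proof -
  obtain i where i: "i \<in> {1..order \<Delta>}"
    and agree: "regular_perm \<Delta> \<beta> (\<psi> (weval G p u)) i = regular_perm \<Delta> \<beta> (\<psi> (weval G p v)) i"
    using assms(11) regular_perm_local_embedding(2)[OF G \<Delta> \<beta> pX \<open>1 \<le> t\<close> \<psi>] u v by auto
  have in_ball: "weval G p u \<in> ball_S G (p ` X) t" "weval G p v \<in> ball_S G (p ` X) t"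
    using u v by (auto intro!: weval_in_ball_S)
  then have "\<psi> (weval G p u) \<in> carrier \<Delta>" "\<psi> (weval G p v) \<in> carrier \<Delta>"
    using \<psi> by (auto simp: local_embedding_def)
  then have "\<psi> (weval G p u) = \<psi> (weval G p v)"
    using regular_perm_agree_imp_eq[OF \<Delta> \<beta> _ _ i agree] by blast
  then show ?thesis
    using \<psi> in_ball by (auto simp: local_embedding_def dest: inj_onD)
qed

lemma valid_pair_hom_near_solution:
  assumes "valid_pair G X p \<epsilon> \<delta> E" "0 < n" "\<rho> ` X \<subseteq> carrier (sym_group n)"
    and "\<forall>w\<in>E. weval (sym_group n) \<rho> w = id"
  shows "\<exists>\<phi> \<in> hom G (sym_group n). \<forall>x\<in>X. ham n (\<rho> x) (\<phi> (p x)) < \<epsilon>"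
proof -
  have "\<forall>w\<in>E. ham n (weval (sym_group n) \<rho> w) id < \<delta>"
    using assms(1,4) by (simp add: valid_pair_def ham_def)
  then show ?thesis
    using assms(1-3) unfolding valid_pair_def by (metis Suc_leI One_nat_def)
qed

lemma stable_local_embedding_hom_inj_on_ball_S:
  fixes l :: nat
  assumes G: "group G" and "finite X" and pX: "p ` X \<subseteq> carrier G" and "0 < l" and "real l \<le> t"
    and valid: "valid_pair G X p (1 / (2 * real l)) \<delta> E"
    and E_short: "\<forall>r\<in>E. real (length r) \<le> t"
    and \<Delta>: "group \<Delta>" "finite (carrier \<Delta>)"
    and \<psi>: "local_embedding G (ball_S G (p ` X) t) \<Delta> \<psi>"
  shows "\<exists>\<phi> \<in> hom G (sym_group (order \<Delta>)). inj_on \<phi> (ball_S G (p ` X) (real l))"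
proof -
  interpret \<Delta>: group \<Delta>
    by (rule \<Delta>(1))
  obtain \<beta> where \<beta>: "bij_betw \<beta> {1..order \<Delta>} (carrier \<Delta>)"
    using ex_bij_betw_nat_finite_1[OF \<Delta>(2)] unfolding order_def by blast
  have "0 < order \<Delta>"
    using \<Delta>(2) \<Delta>.one_closed by (auto simp: order_def card_gt_0_iff)
  have "1 \<le> t"
    using \<open>0 < l\<close> \<open>real l \<le> t\<close> by linarith
  define \<rho> where "\<rho> = regular_perm \<Delta> \<beta> \<circ> (\<psi> \<circ> p)"
  note \<rho>_closed = regular_perm_local_embedding(1)[OF G \<Delta>(1) \<beta> pX \<open>1 \<le> t\<close> \<psi>, folded \<rho>_def]
  note \<rho>_word = regular_perm_local_embedding(2)[OF G \<Delta>(1) \<beta> pX \<open>1 \<le> t\<close> \<psi>, folded \<rho>_def]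
  have "\<forall>w\<in>E. weval (sym_group (order \<Delta>)) \<rho> w = id"
  proof
    fix w assume "w \<in> E"
    then have "fst ` set w \<subseteq> X" "real (length w) \<le> t" "weval G p w = \<one>\<^bsub>G\<^esub>"
      using valid E_short by (auto simp: valid_pair_def free_kernel_def free_words_def)
    moreover have "\<psi> \<one>\<^bsub>G\<^esub> = \<one>\<^bsub>\<Delta>\<^esub>"
      using local_embedding_one[OF G \<Delta>(1) \<psi>] weval_in_ball_S[of "[]" X t G p] \<open>1 \<le> t\<close> by simp
    ultimately show "weval (sym_group (order \<Delta>)) \<rho> w = id"
      using \<rho>_word regular_perm_one[OF \<Delta>(1) \<beta>] by simp
  qed
  then obtain \<phi> where \<phi>: "\<phi> \<in> hom G (sym_group (order \<Delta>))"
    "\<forall>x\<in>X. ham (order \<Delta>) (\<rho> x) (\<phi> (p x)) < 1 / (2 * real l)"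
    using valid_pair_hom_near_solution[OF valid \<open>0 < order \<Delta>\<close> \<rho>_closed] by blast
  have "inj_on \<phi> (ball_S G (p ` X) (real l))"
  proof (rule inj_on_ball_S_if_close[OF G \<open>finite X\<close> pX \<open>0 < l\<close> \<open>0 < order \<Delta>\<close> \<rho>_closed \<phi>])
    fix u v
    assume u: "fst ` set u \<subseteq> X" "length u \<le> l" and v: "fst ` set v \<subseteq> X" "length v \<le> l"
      and "\<exists>i\<in>{1..order \<Delta>}. weval (sym_group (order \<Delta>)) \<rho> u i = weval (sym_group (order \<Delta>)) \<rho> v i"
    moreover have "real (length u) \<le> t" "real (length v) \<le> t"
      using u(2) v(2) \<open>real l \<le> t\<close> by (meson of_nat_le_iff order_trans)+
    ultimately show "weval G p u = weval G p v"
      using regular_perm_local_embedding_agree_imp_eq[OF G \<Delta>(1) \<beta> pX \<open>1 \<le> t\<close> \<psi>]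
      unfolding \<rho>_def by blast
  qed
  with \<phi>(1) show ?thesis
    by blast
qed

section \<open>Growth functions and residual finiteness\<close>

lemma ex_finite_group_hom_inj_on:
  fixes H :: "('h, 'c) monoid_scheme"
  assumes H: "group H" "finite (carrier H)"
    and \<phi>: "\<phi> \<in> hom G H" "inj_on \<phi> A" "\<phi> ` A \<subseteq> carrier H"
  shows "\<exists>D h. finite_group D \<and> card (carrier D) = card (carrier H) \<and> h \<in> hom G D \<and> inj_on h A"
proof -
  obtain f :: "'h \<Rightarrow> nat" where f: "inj_on f (carrier H)"
    using ex_bij_betw_finite_nat[OF H(2)] bij_betw_def by blast
  then have iso: "f \<in> iso H (image_group f H)"
    by (rule inj_imp_image_group_iso)
  have "finite_group (image_group f H)"
    using group.inj_imp_image_group_is_group[OF H(1) f] H(2)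
    by (simp add: finite_group_def image_group_carrier)
  moreover have "card (carrier (image_group f H)) = card (carrier H)"
    using iso_same_card[OF is_isoI[OF iso]] by simp
  moreover have "f \<circ> \<phi> \<in> hom G (image_group f H)"
    using hom_compose[OF \<phi>(1), of f] iso unfolding iso_def by blast
  moreover have "inj_on (f \<circ> \<phi>) A"
    using comp_inj_on[OF \<phi>(2) inj_on_subset[OF f \<phi>(3)]] .
  ultimately show ?thesis
    by blast
qed

lemma stab_fun_attained:
  assumes "stable G X p" "0 < x"
  shows "\<exists>\<delta> E. valid_pair G X p (1 / x) \<delta> E \<and> wnorm E \<le> stab_fun G X p x"
proof -
  txt \<open>Since \<open>\<delta> \<le> 1\<close>, a valid pair of least norm has norm below every \<open>wnorm E' / \<delta>'\<close>.\<close>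
  define has_norm where "has_norm k \<longleftrightarrow> (\<exists>\<delta> E. valid_pair G X p (1 / x) \<delta> E \<and> wnorm E = real k)"
    for k :: nat
  have "0 < 1 / x"
    using assms(2) by simp
  then obtain \<delta>\<^sub>0 E\<^sub>0 where "valid_pair G X p (1 / x) \<delta>\<^sub>0 E\<^sub>0"
    using assms(1) unfolding stable_def by blast
  then have "has_norm (\<Sum>w\<in>E\<^sub>0. length w)"
    unfolding has_norm_def wnorm_def by blast
  then obtain \<delta> E where valid: "valid_pair G X p (1 / x) \<delta> E"
    and norm: "wnorm E = real (LEAST k. has_norm k)"
    using LeastI[of has_norm] unfolding has_norm_def by blast
  have "wnorm E \<le> wnorm E' / \<delta>'" if "valid_pair G X p (1 / x) \<delta>' E'" for \<delta>' E'
  proof -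
    have "has_norm (\<Sum>w\<in>E'. length w)"
      using that unfolding has_norm_def wnorm_def by blast
    then have "(LEAST k. has_norm k) \<le> (\<Sum>w\<in>E'. length w)"
      by (rule Least_le)
    then have "wnorm E \<le> wnorm E'"
      using norm unfolding wnorm_def by (metis of_nat_le_iff)
    also have "\<dots> \<le> wnorm E' / \<delta>'"
    proof -
      have "0 < \<delta>'" "\<delta>' \<le> 1"
        using that by (simp_all add: valid_pair_def)
      moreover have "0 \<le> wnorm E'"
        unfolding wnorm_def by (rule of_nat_0_le_iff)
      ultimately show ?thesis
        by (simp add: le_divide_eq mult_left_le)
    qed
    finally show ?thesis .
  qed
  then have "wnorm E \<le> stab_fun G X p x"
    unfolding stab_fun_def using valid by (intro cInf_greatest) blast+
  with valid show ?thesis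
    by blast
qed

lemma LEF_growth_attained:
  assumes "group G" "LEF G" "finite S" "S \<subseteq> carrier G"
  shows "\<exists>\<Delta> \<psi>. finite_group \<Delta> \<and> card (carrier \<Delta>) = LEF_growth G S t \<and>
    local_embedding G (ball_S G S t) \<Delta> \<psi>"
proof -
  have "ball_S G S t \<subseteq> carrier G" "finite (ball_S G S t)"
    using group.ball_S_subset_carrier[OF assms(1,4)] finite_ball_S[OF assms(3)] .
  then have "\<exists>m \<Delta> \<psi>. finite_group \<Delta> \<and> card (carrier \<Delta>) = m \<and> local_embedding G (ball_S G S t) \<Delta> \<psi>"
    using assms(2) unfolding LEF_def by blast
  then show ?thesis
    unfolding LEF_growth_def by (rule LeastI_ex)
qed

lemma LEF_stable_hom_inj_on_ball_S:
  fixes l :: nat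
  assumes G: "group G" and "finite X" and pX: "p ` X \<subseteq> carrier G"
    and "stable G X p" "LEF G" "0 < l"
  shows "\<exists>D h. finite_group D \<and>
    card (carrier D) = fact (LEF_growth G (p ` X) (max (stab_fun G X p (2 * real l)) (real l))) \<and>
    h \<in> hom G D \<and> inj_on h (ball_S G (p ` X) (real l))"
proof -
  define t where "t = max (stab_fun G X p (2 * real l)) (real l)"
  obtain \<delta> E where valid: "valid_pair G X p (1 / (2 * real l)) \<delta> E"
    and norm: "wnorm E \<le> stab_fun G X p (2 * real l)"
    using stab_fun_attained[OF assms(4), of "2 * real l"] \<open>0 < l\<close> by auto
  have E_short: "\<forall>r\<in>E. real (length r) \<le> t"
  proof
    fix r assume "r \<in> E"
    then have "length r \<le> (\<Sum>w\<in>E. length w)"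
      using valid by (intro member_le_sum) (simp_all add: valid_pair_def)
    then show "real (length r) \<le> t"
      using norm unfolding t_def wnorm_def by linarith
  qed
  obtain \<Delta> \<psi> where \<Delta>: "finite_group \<Delta>" "card (carrier \<Delta>) = LEF_growth G (p ` X) t"
    and \<psi>: "local_embedding G (ball_S G (p ` X) t) \<Delta> \<psi>"
    using LEF_growth_attained[OF G assms(5) finite_imageI[OF \<open>finite X\<close>] pX] by blast
  obtain \<phi> where \<phi>: "\<phi> \<in> hom G (sym_group (order \<Delta>))" "inj_on \<phi> (ball_S G (p ` X) (real l))"
    using stable_local_embedding_hom_inj_on_ball_S[OF G \<open>finite X\<close> pX \<open>0 < l\<close> _ valid E_short _ _ \<psi>]
      \<Delta>(1) by (auto simp: t_def finite_group_def)
  have "finite (carrier (sym_group (order \<Delta>)))"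
    using sym_group_card_carrier card.infinite by (metis fact_nonzero)
  moreover have "\<phi> ` ball_S G (p ` X) (real l) \<subseteq> carrier (sym_group (order \<Delta>))"
    using group.ball_S_subset_carrier[OF G pX] \<phi>(1) by (auto simp: hom_def)
  ultimately show ?thesis
    using ex_finite_group_hom_inj_on[OF sym_group_is_group _ \<phi>] \<Delta>(2)
    by (simp add: sym_group_card_carrier order_def t_def)
qed

lemma residually_finite_if_hom_inj_on_ball_S:
  assumes G: "group G" and epi: "epi_from_free G X p"
    and hom_inj: "\<And>l::nat. 0 < l \<Longrightarrow>
      \<exists>D h. finite_group D \<and> h \<in> hom G D \<and> inj_on h (ball_S G (p ` X) (real l))"
  shows "residually_finite G"
  unfolding residually_finite_def
proof (intro ballI impI)
  fix g assume "g \<in> carrier G" "g \<noteq> \<one>\<^bsub>G\<^esub>"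
  then obtain w where w: "fst ` set w \<subseteq> X" "g = weval G p w"
    using epi by (force simp: epi_from_free_def free_words_def)
  define l where "l = Suc (length w)"
  obtain D h where D: "finite_group D" and h: "h \<in> hom G D"
    and inj: "inj_on h (ball_S G (p ` X) (real l))"
    using hom_inj[of l] by (auto simp: l_def)
  interpret h: group_hom G D h
    using G D h by (simp add: finite_group_def group_hom_def group_hom_axioms_def)
  have "g \<in> ball_S G (p ` X) (real l)" "\<one>\<^bsub>G\<^esub> \<in> ball_S G (p ` X) (real l)"
    using w weval_in_ball_S[of w X "real l" G p] weval_in_ball_S[of "[]" X "real l" G p]
    by (simp_all add: l_def)
  then have "h g \<noteq> \<one>\<^bsub>D\<^esub>"
    using inj \<open>g \<noteq> \<one>\<^bsub>G\<^esub>\<close> h.hom_one by (metis inj_onD)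
  with D h show "\<exists>D h. finite_group D \<and> h \<in> hom G D \<and> h g \<noteq> \<one>\<^bsub>D\<^esub>"
    by blast
qed

theorem proposition2p14:
  fixes G :: "('g, 'b) monoid_scheme" and X :: "'x set" and p :: "'x \<Rightarrow> 'g"
  assumes "group G"
    and "finite X"
    and "epi_from_free G X p"
    and "stable G X p"
    and "LEF G"
  shows "residually_finite G \<and>
    (\<forall>l::nat. l > 0 \<longrightarrow>
       max (fact (LEF_growth G (p ` X) (stab_fun G X p (2 * real l))))
           (fact (LEF_growth G (p ` X) (real l))) \<ge> RF_growth G (p ` X) (real l))"
proof -
  have pX: "p ` X \<subseteq> carrier G"
    using assms(3) by (simp add: epi_from_free_def)
  note hom_inj = LEF_stable_hom_inj_on_ball_S[OF assms(1,2) pX assms(4,5)]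
  have "residually_finite G"
    using residually_finite_if_hom_inj_on_ball_S[OF assms(1,3)] hom_inj by blast
  moreover have "RF_growth G (p ` X) (real l)
      \<le> max (fact (LEF_growth G (p ` X) (stab_fun G X p (2 * real l))))
            (fact (LEF_growth G (p ` X) (real l)))" if "0 < l" for l :: nat
  proof -
    have "RF_growth G (p ` X) (real l)
        \<le> fact (LEF_growth G (p ` X) (max (stab_fun G X p (2 * real l)) (real l)))"
      using hom_inj[OF that] unfolding RF_growth_def by (intro Least_le) blast
    also have "\<dots> \<le> max (fact (LEF_growth G (p ` X) (stab_fun G X p (2 * real l))))
        (fact (LEF_growth G (p ` X) (real l)))"
      by (simp add: max_def)
    finally show ?thesis .
  qed
  ultimately show ?thesis
    by blast
qed
end
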